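(* Let $P,Q,R_0,R_1$ be integers with $P>0$, $Q<0$, $R_0,R_1$ positive, and $\gcd(P,Q)=\gcd(R_1,Q)=1$. Let $R_{n+2}=PR_{n+1}-QR_n$ ($n\ge0$) and let $\alpha,\beta$ be the roots of $x^2-Px+Q$ with $|\alpha|\ge|\beta|$. Then \[R_m\ge(R_1+R_0|\beta|)\,\alpha^{m-2}\quad\text{for all } m\ge2.\] *)

theory Defs
  imports Complex_Main
begin

end

theory Submission
  imports Defs
begin

text \<open>By Vieta, \<open>\<alpha> + \<beta> = P > 0\<close> and \<open>\<alpha>\<beta> = Q < 0\<close>, so \<open>\<beta> < 0 < \<alpha>\<close> and \<open>\<alpha> = P - \<beta> \<ge> 1\<close>.
  The recurrence telescopes to \<open>R(n+1) - \<beta> R(n) = \<alpha>\<^sup>n (R(1) - \<beta> R(0))\<close>, and since all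
  \<open>R(n)\<close> are positive, \<open>R(n+2) - (R(n+1) - \<beta> R(n)) = (P - 1) R(n+1) - \<beta> (\<alpha> - 1) R(n) \<ge> 0\<close>.\<close>

lemma monic_quadratic_vieta:
  fixes p q a b :: "'a::comm_ring_1"
  assumes "\<And>x. x ^ 2 - p * x + q = (x - a) * (x - b)"
  shows "p = a + b" and "q = a * b"
proof -
  show q: "q = a * b" using assms[of 0] by simp
  have "1 - p + q = (1 - a) * (1 - b)" using assms[of 1] by simp
  then show "p = a + b" using q by (simp add: algebra_simps)
qed

lemma neg_of_mult_neg_add_pos:
  fixes a b :: "'a::linordered_idom"
  assumes "a * b < 0" and "a + b > 0" and "\<bar>b\<bar> \<le> \<bar>a\<bar>"
  shows "b < 0"
  using assms by (auto simp: mult_less_0_iff abs_if split: if_splits)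

lemma second_order_recurrence_pos:
  fixes r :: "nat \<Rightarrow> 'a::linordered_idom"
  assumes "r 0 > 0" and "r 1 > 0" and "p > 0" and "q < 0"
    and "\<And>n. r (n + 2) = p * r (n + 1) - q * r n"
  shows "r n > 0"
proof -
  have "r n > 0 \<and> r (n + 1) > 0" for n
  proof (induction n)
    case 0
    then show ?case using assms(1,2) by simp
  next
    case (Suc n)
    have "p * r (n + 1) > 0" and "q * r n < 0"
      using Suc assms(3,4) by (simp_all add: mult_pos_pos mult_neg_pos)
    then have "r (n + 2) > 0" using assms(5)[of n] by simp
    then show ?case using Suc by (simp add: numeral_2_eq_2)
  qed
  then show ?thesis by simp
qed

lemma second_order_recurrence_shift:
  fixes r :: "nat \<Rightarrow> 'a::comm_ring_1"
  assumes "\<And>n. r (n + 2) = (a + b) * r (n + 1) - a * b * r n"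
  shows "r (n + 1) - b * r n = a ^ n * (r 1 - b * r 0)"
proof (induction n)
  case 0
  then show ?case by simp
next
  case (Suc n)
  have "r (Suc n + 1) - b * r (Suc n) = a * (r (n + 1) - b * r n)"
    using assms[of n] by (simp add: algebra_simps numeral_2_eq_2)
  then show ?case using Suc by simp
qed

lemma second_order_recurrence_lower_bound:
  fixes r :: "nat \<Rightarrow> 'a::linordered_idom"
  assumes rec: "\<And>n. r (n + 2) = (a + b) * r (n + 1) - a * b * r n"
    and "\<And>n. r n \<ge> 0" and "b \<le> 0" and "a + b \<ge> 1"
  shows "r (k + 2) \<ge> a ^ k * (r 1 - b * r 0)"
proof -
  have "r (k + 2) - (r (k + 1) - b * r k) = (a + b - 1) * r (k + 1) + (- b) * (a - 1) * r k"
    using rec[of k] by (simp add: algebra_simps)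
  also have "\<dots> \<ge> 0" using assms(2-4) by (intro add_nonneg_nonneg mult_nonneg_nonneg) simp_all
  finally show ?thesis using second_order_recurrence_shift[OF rec, of k] by simp
qed

theorem lemma11:
  fixes P Q :: int and R :: "nat \<Rightarrow> int" and \<alpha> \<beta> :: real
  assumes "P > 0" and "Q < 0" and "R 0 > 0" and "R 1 > 0"
    and "gcd P Q = 1" and "gcd (R 1) Q = 1"
    and rec: "\<And>n. R (n + 2) = P * R (n + 1) - Q * R n"
    and roots: "\<And>x::real. x ^ 2 - of_int P * x + of_int Q = (x - \<alpha>) * (x - \<beta>)"
    and "\<bar>\<alpha>\<bar> \<ge> \<bar>\<beta>\<bar>"
  shows "\<forall>m\<ge>2. real_of_int (R m) \<ge> (of_int (R 1) + of_int (R 0) * \<bar>\<beta>\<bar>) * \<alpha> ^ (m - 2)"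
proof (intro allI impI)
  fix m :: nat
  assume "m \<ge> 2"
  then obtain k where m: "m = k + 2" using le_Suc_ex by (metis add.commute)
  have P: "of_int P = \<alpha> + \<beta>" and Q: "of_int Q = \<alpha> * \<beta>"
    using monic_quadratic_vieta[OF roots] by simp_all
  have "\<beta> < 0"
    using neg_of_mult_neg_add_pos[of \<alpha> \<beta>] P Q assms(1,2,9) by (simp add: add.commute)
  have "\<alpha> + \<beta> \<ge> 1" using P assms(1) by simp
  have real_rec: "real_of_int (R (n + 2)) = (\<alpha> + \<beta>) * R (n + 1) - \<alpha> * \<beta> * R n" for n
    using arg_cong[OF rec[of n], of real_of_int] P Q by simp
  have "real_of_int (R n) \<ge> 0" for n
    using second_order_recurrence_pos[of R P Q n] assms(1-4) rec by simp
  then have "real_of_int (R m) \<ge> \<alpha> ^ k * (R 1 - \<beta> * R 0)"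
    using second_order_recurrence_lower_bound[OF real_rec] m \<open>\<beta> < 0\<close> \<open>\<alpha> + \<beta> \<ge> 1\<close> by simp
  then show "real_of_int (R m) \<ge> (of_int (R 1) + of_int (R 0) * \<bar>\<beta>\<bar>) * \<alpha> ^ (m - 2)"
    using m \<open>\<beta> < 0\<close> by (simp add: algebra_simps)
qed

end
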